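(* Let $K$ be an open Legendrian knot for which \begin{equation} d_{\mathcal{H}}(p,q)=d_K(p,q)\qquad\text{for any $p$, $q\in K\setminus\{\infty\}$}. \end{equation} Then, $K$ is an infinite $\mathbb{R}$-circle.
   Context: $\mathcal{H}=\mathbb{C}\times\mathbb{R}$ is the 3-dimensional Heisenberg group with coordinates $(x,y,u)$, group law $(x,y,u)\cdot(x',y',u')=(x+x',y+y',u+u'+\tfrac12(xy'-x'y))$, horizontal distribution spanned by $X=\partial_x-\tfrac12 y\,\partial_u$, $Y=\partial_y+\tfrac12 x\,\partial_u$ (orthonormal, norm $|\cdot|$). The Korányi distance is $d_{\mathcal{H}}(p,q)=\|p^{-1}q\|_{\mathcal{H}}$, $\|(x,y,u)\|_{\mathcal{H}}=\sqrt[4]{(x^2+y^2)^2+16u^2}$. An open Legendrian knot is a smooth embedded closed Legendrian curve in $\mathcal{H}\cup\{\infty\}\cong S^3$ passing through $\infty$; $d_K$ denotes arc-length distance along $K$. An $\mathbb{R}$-circle is the intersection of $\partial B^2_{\mathbb{C}}\cong\mathcal{H}\cup\{\infty\}$ with the closure of a complete totally geodesic totally real surface in the complex hyperbolic unit ball $B^2_{\mathbb{C}}$; it is infinite if it passes through $\infty$. Equivalently, infinite $\mathbb{R}$-circles are exactly the open Legendrian knots whose vertical projection $(x,y,u)\mapsto(x,y)$ is an affine line in $\mathbb{C}$, i.e., the lines $\{(x_0,y_0,u_0)+t(a,b,-\tfrac12(y_0a-x_0b)):t\in\mathbb{R}\}$ with $(a,b)\neq(0,0)$. *)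

theory Defs
  imports "HOL-Analysis.Analysis"
begin

text \<open>Points of the Heisenberg group H = C x R are triples (x, y, u).\<close>
type_synonym heis = "real \<times> real \<times> real"

definition heis_mult :: "heis \<Rightarrow> heis \<Rightarrow> heis" where
  "heis_mult p q = (case p of (x, y, u) \<Rightarrow> case q of (x', y', u') \<Rightarrow>
      (x + x', y + y', u + u' + (1/2) * (x * y' - x' * y)))"

definition heis_inv :: "heis \<Rightarrow> heis" where
  "heis_inv p = (case p of (x, y, u) \<Rightarrow> (-x, -y, -u))"

definition koranyi_norm :: "heis \<Rightarrow> real" where
  "koranyi_norm p = (case p of (x, y, u) \<Rightarrow> root 4 ((x^2 + y^2)^2 + 16 * u^2))"

definition d_H :: "heis \<Rightarrow> heis \<Rightarrow> real" where
  "d_H p q = koranyi_norm (heis_mult (heis_inv p) q)"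

text \<open>A tangent vector v = (x', y', u') at p = (x, y, u) is horizontal iff it lies in
  span{X, Y}, i.e. v = x' X + y' Y; its sub-Riemannian norm is then sqrt(x'^2 + y'^2).\<close>
definition horizontal :: "heis \<Rightarrow> heis \<Rightarrow> bool" where
  "horizontal p v = (case p of (x, y, u) \<Rightarrow> case v of (x', y', u') \<Rightarrow>
      u' = (1/2) * (x * y' - y * x'))"

definition hnorm :: "heis \<Rightarrow> real" where
  "hnorm v = (case v of (x', y', u') \<Rightarrow> sqrt (x'^2 + y'^2))"

definition smooth_curve_with_derivs :: "(real \<Rightarrow> heis) \<Rightarrow> (nat \<Rightarrow> real \<Rightarrow> heis) \<Rightarrow> bool" where
  "smooth_curve_with_derivs \<gamma> D \<longleftrightarrow>
     D 0 = \<gamma> \<and> (\<forall>n t. (D n has_vector_derivative D (Suc n) t) (at t))"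

text \<open>A parametrisation gamma : R -> H of the finite part K - {infinity} of an open
  Legendrian knot K: smooth, regular, Legendrian, injective and proper (so that its
  closure in H \<union> {infinity} = S^3 is the embedded closed curve K through infinity).\<close>
definition open_legendrian_param :: "(real \<Rightarrow> heis) \<Rightarrow> (nat \<Rightarrow> real \<Rightarrow> heis) \<Rightarrow> bool" where
  "open_legendrian_param \<gamma> D \<longleftrightarrow>
     smooth_curve_with_derivs \<gamma> D \<and>
     (\<forall>t. D 1 t \<noteq> 0) \<and>
     (\<forall>t. horizontal (\<gamma> t) (D 1 t)) \<and>
     inj \<gamma> \<and>
     filterlim (\<lambda>t. norm (\<gamma> t)) at_top at_infinity"

definition arc_length :: "(nat \<Rightarrow> real \<Rightarrow> heis) \<Rightarrow> real \<Rightarrow> real \<Rightarrow> real" where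
  "arc_length D s t = integral {s..t} (\<lambda>r. hnorm (D 1 r))"

definition infinite_R_circle :: "heis set \<Rightarrow> bool" where
  "infinite_R_circle K \<longleftrightarrow>
     (\<exists>x0 y0 u0 a b. (a, b) \<noteq> (0, 0) \<and>
        K = {(x0 + t * a, y0 + t * b, u0 + t * (-(1/2) * (y0 * a - x0 * b))) | t. True})"

end

theory Submission
  imports Defs
begin

(*
  Fix s and follow the chord gamma(s)^-1 gamma(t) = (a, b, w) as t varies. Left translation
  preserves horizontality and horizontal speed, so the chord is again a horizontal curve,
  and by hypothesis its Koranyi norm N is its arc length. Differentiating N^4 therefore
  gives 4 N^3 |gamma'|, while horizontality and Cauchy-Schwarz bound the derivative of
  N^4 = (a^2 + b^2)^2 + 16 w^2 by 4 N^2 |(a, b)| |gamma'|. Hence N <= |(a, b)|, which forces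
  w = 0: all chords of K are horizontal. So the translate gamma(0)^-1 gamma lies in the
  plane u = 0, and horizontality of the chords between its points makes it collinear, so K lies on a left translate of a horizontal line through the
  origin, which is an infinite R-circle. Continuity, injectivity and properness of the
  parametrisation make K fill the whole line.
*)

lemma heis_mult_components:
  "heis_mult (x, y, u) (x', y', u') = (x + x', y + y', u + u' + (x * y' - x' * y) / 2)"
  by (simp add: heis_mult_def)

lemma heis_mult_inv_left:
  "heis_mult (heis_inv (x, y, u)) (x', y', u') = (x' - x, y' - y, u' - u - (x * y' - x' * y) / 2)"
  by (simp add: heis_mult_def heis_inv_def field_simps)

lemma heis_mult_inv_cancel_left: "heis_mult g (heis_mult (heis_inv g) p) = p"
  by (cases g; cases p) (simp add: heis_mult_def heis_inv_def field_simps)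

lemma heis_mult_inv_self: "heis_mult (heis_inv p) p = 0"
  by (cases p) (simp add: heis_mult_def heis_inv_def zero_prod_def)

lemma heis_inv_chord: "heis_inv (heis_mult (heis_inv p) q) = heis_mult (heis_inv q) p"
  by (cases p; cases q) (simp add: heis_mult_def heis_inv_def field_simps)

lemma heis_chord_left_translate:
  "heis_mult (heis_inv (heis_mult g p)) (heis_mult g q) = heis_mult (heis_inv p) q"
  by (cases g; cases p; cases q) (simp add: heis_mult_def heis_inv_def field_simps)

(* Left translation by g is affine with linear part heis_left_diff g, which is therefore
   also its differential at every point. *)
definition heis_left_diff :: "heis \<Rightarrow> heis \<Rightarrow> heis" where
  "heis_left_diff g v =
     (case g of (x, y, _) \<Rightarrow> case v of (p, q, r) \<Rightarrow> (p, q, r + (x * q - p * y) / 2))"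

lemma heis_mult_eq_add_left_diff: "heis_mult g p = g + heis_left_diff g p"
  by (cases g; cases p) (simp add: heis_mult_def heis_left_diff_def)

lemma bounded_linear_heis_left_diff: "bounded_linear (heis_left_diff g)"
  unfolding linear_conv_bounded_linear[symmetric]
  by (rule linearI; cases g) (auto simp: heis_left_diff_def field_simps split: prod.split)

lemma has_vector_derivative_heis_mult_left:
  assumes "(\<gamma> has_vector_derivative v) (at t)"
  shows "((\<lambda>\<tau>. heis_mult g (\<gamma> \<tau>)) has_vector_derivative heis_left_diff g v) (at t)"
  unfolding heis_mult_eq_add_left_diff add.commute[of g] has_vector_derivative_add_const
  by (rule bounded_linear.has_vector_derivative[OF bounded_linear_heis_left_diff assms])

lemma continuous_on_heis_mult_left:
  "continuous_on S \<gamma> \<Longrightarrow> continuous_on S (\<lambda>\<tau>. heis_mult g (\<gamma> \<tau>))"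
  unfolding heis_mult_eq_add_left_diff
  by (intro continuous_intros bounded_linear.continuous_on[OF bounded_linear_heis_left_diff])

lemma heis_left_diff_eq_0_iff: "heis_left_diff g v = 0 \<longleftrightarrow> v = 0"
  by (cases g; cases v) (auto simp: heis_left_diff_def zero_prod_def)

lemma horizontal_heis_left_diff:
  "horizontal (heis_mult g p) (heis_left_diff g v) \<longleftrightarrow> horizontal p v"
  by (cases g; cases p; cases v)
    (auto simp: heis_mult_def heis_left_diff_def horizontal_def field_simps)

lemma hnorm_heis_left_diff: "hnorm (heis_left_diff g v) = hnorm v"
  by (cases g; cases v) (simp add: heis_left_diff_def hnorm_def)

lemma koranyi_norm_nonneg: "koranyi_norm p \<ge> 0"
  by (cases p) (simp add: koranyi_norm_def)

lemma koranyi_norm_pow4: "koranyi_norm (x, y, u) ^ 4 = (x^2 + y^2)^2 + 16 * u^2"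
  by (simp add: koranyi_norm_def real_root_pow_pos2)

lemma koranyi_norm_sq: "koranyi_norm (x, y, u) ^ 2 = sqrt ((x^2 + y^2)^2 + 16 * u^2)"
proof -
  have "root 4 z = sqrt (sqrt z)" for z
    using real_root_mult_exp[of 2 2 z] by (simp add: sqrt_def)
  then show ?thesis by (simp add: koranyi_norm_def)
qed

lemma hnorm_eq: "hnorm v = sqrt (fst v ^ 2 + fst (snd v) ^ 2)"
  by (simp add: hnorm_def split: prod.split)

lemma hnorm_pos_if_horizontal:
  assumes "horizontal p v" and "v \<noteq> 0"
  shows "hnorm v > 0"
  using assms by (cases p; cases v)
    (auto simp: horizontal_def hnorm_def zero_prod_def sum_power2_gt_zero_iff)

lemma has_real_derivative_koranyi_norm_pow4:
  assumes "(c has_vector_derivative (p, q, r)) (at t)" and "c t = (a, b, w)"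
  shows "((\<lambda>\<tau>. koranyi_norm (c \<tau>) ^ 4) has_real_derivative
           4 * ((a^2 + b^2) * (a * p + b * q) + 8 * w * r)) (at t)"
proof -
  have component: "((\<lambda>\<tau>. f (c \<tau>)) has_real_derivative f (p, q, r)) (at t)"
    if "bounded_linear f" for f :: "heis \<Rightarrow> real"
    using bounded_linear.has_vector_derivative[OF that assms(1)]
    by (simp add: has_real_derivative_iff_has_vector_derivative)
  have "koranyi_norm (c \<tau>) ^ 4 =
      (fst (c \<tau>) ^ 2 + fst (snd (c \<tau>)) ^ 2)^2 + 16 * snd (snd (c \<tau>)) ^ 2" for \<tau>
    by (metis koranyi_norm_pow4 prod.collapse)
  then show ?thesis
    using component[OF bounded_linear_fst]
      component[OF bounded_linear_compose[OF bounded_linear_fst bounded_linear_snd]]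
      component[OF bounded_linear_compose[OF bounded_linear_snd bounded_linear_snd]]
    by (auto intro!: derivative_eq_intros simp: assms(2) algebra_simps)
qed

lemma koranyi_norm_pow4_derivative_bound:
  fixes a b w p q :: real
  shows "(a^2 + b^2) * (a * p + b * q) + 4 * w * (a * q - b * p)
           \<le> koranyi_norm (a, b, w) ^ 2 * sqrt (a^2 + b^2) * sqrt (p^2 + q^2)"
proof -
  define S A B where "S = a^2 + b^2" and "A = a * p + b * q" and "B = a * q - b * p"
  have lagrange: "A^2 + B^2 = S * (p^2 + q^2)"
    by (simp add: S_def A_def B_def power2_eq_square algebra_simps)
  have "(S * A + 4 * w * B)^2 \<le> (S^2 + 16 * w^2) * (A^2 + B^2)"
  proof -
    have "(S^2 + 16 * w^2) * (A^2 + B^2) - (S * A + 4 * w * B)^2 = (S * B - 4 * w * A)^2"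
      by (simp add: power2_eq_square algebra_simps)
    then show ?thesis by (metis diff_ge_0_iff_ge zero_le_power2)
  qed
  then have "S * A + 4 * w * B \<le> sqrt ((S^2 + 16 * w^2) * (A^2 + B^2))"
    by (rule real_le_rsqrt)
  also have "\<dots> = koranyi_norm (a, b, w) ^ 2 * sqrt S * sqrt (p^2 + q^2)"
    by (simp add: lagrange koranyi_norm_sq S_def real_sqrt_mult)
  finally show ?thesis by (simp add: S_def A_def B_def)
qed

lemma koranyi_norm_le_imp_vertical_zero:
  assumes "koranyi_norm (a, b, w) \<le> sqrt (a^2 + b^2)"
  shows "w = 0"
proof -
  have "koranyi_norm (a, b, w) ^ 4 \<le> sqrt (a^2 + b^2) ^ 4"
    by (rule power_mono[OF assms koranyi_norm_nonneg])
  also have "\<dots> = (a^2 + b^2)^2"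
    using power_mult[of "sqrt (a^2 + b^2)" 2 2] by simp
  finally show ?thesis by (simp add: koranyi_norm_pow4)
qed

lemma koranyi_norm_eq_length_imp_vertical_zero:
  fixes c c' :: "real \<Rightarrow> heis"
  assumes deriv: "(c has_vector_derivative c' t) (at t)"
    and horizontal: "horizontal (c t) (c' t)" and regular: "c' t \<noteq> 0"
    and continuous: "continuous_on {s..} (\<lambda>r. hnorm (c' r))"
    and length: "\<And>\<tau>. s \<le> \<tau> \<Longrightarrow> koranyi_norm (c \<tau>) = integral {s..\<tau>} (\<lambda>r. hnorm (c' r))"
    and "s < t"
  shows "snd (snd (c t)) = 0"
proof -
  obtain a b w where ct: "c t = (a, b, w)" by (cases "c t")
  obtain p q r where c't: "c' t = (p, q, r)" by (cases "c' t")
  define L where "L \<tau> = integral {s..\<tau>} (\<lambda>r. hnorm (c' r))" for \<tau>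
  define N where "N = koranyi_norm (a, b, w)"
  define m where "m = hnorm (c' t)"
  have r: "r = (a * q - b * p) / 2"
    using horizontal by (simp add: ct c't horizontal_def)
  have m_pos: "m > 0"
    unfolding m_def by (rule hnorm_pos_if_horizontal[OF horizontal regular])
  have "(L has_real_derivative m) (at t within {s..t + 1})"
    unfolding L_def m_def using \<open>s < t\<close>
    by (intro integral_has_real_derivative continuous_on_subset[OF continuous]) auto
  then have "(L has_real_derivative m) (at t)"
    using \<open>s < t\<close> by (simp add: at_within_Icc_at)
  moreover have "L t = N"
    using length[of t] \<open>s < t\<close> by (simp add: L_def N_def ct)
  ultimately have "((\<lambda>\<tau>. L \<tau> ^ 4) has_real_derivative 4 * N ^ 3 * m) (at t)"
    by (auto intro!: derivative_eq_intros)
  then have "((\<lambda>\<tau>. koranyi_norm (c \<tau>) ^ 4) has_real_derivative 4 * N ^ 3 * m) (at t)"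
    by (rule has_field_derivative_transform_within_open[where S = "{s<..}"])
      (use \<open>s < t\<close> in \<open>auto simp: L_def length\<close>)
  moreover have "((\<lambda>\<tau>. koranyi_norm (c \<tau>) ^ 4) has_real_derivative
      4 * ((a^2 + b^2) * (a * p + b * q) + 4 * w * (a * q - b * p))) (at t)"
    using has_real_derivative_koranyi_norm_pow4[OF deriv[unfolded c't] ct] by (simp add: r)
  ultimately have "4 * N ^ 3 * m = 4 * ((a^2 + b^2) * (a * p + b * q) + 4 * w * (a * q - b * p))"
    by (rule DERIV_unique)
  then have "N ^ 3 * m = (a^2 + b^2) * (a * p + b * q) + 4 * w * (a * q - b * p)"
    by simp
  also have "\<dots> \<le> N ^ 2 * sqrt (a^2 + b^2) * m"
    using koranyi_norm_pow4_derivative_bound by (simp add: N_def m_def c't hnorm_def)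
  finally have "N ^ 2 * (N * m) \<le> N ^ 2 * (sqrt (a^2 + b^2) * m)"
    by (simp add: power3_eq_cube power2_eq_square mult_ac)
  then have "N \<le> sqrt (a^2 + b^2)"
    using m_pos by (cases "N = 0") (simp_all add: N_def koranyi_norm_nonneg)
  then show ?thesis
    unfolding N_def ct by (simp add: koranyi_norm_le_imp_vertical_zero)
qed

lemma isometric_legendrian_chord_horizontal:
  assumes param: "open_legendrian_param \<gamma> D"
    and isometric: "\<forall>s t. s \<le> t \<longrightarrow> d_H (\<gamma> s) (\<gamma> t) = arc_length D s t"
  shows "snd (snd (heis_mult (heis_inv (\<gamma> s)) (\<gamma> t))) = 0"
proof -
  have deriv: "\<And>n t. (D n has_vector_derivative D (Suc n) t) (at t)" and "D 0 = \<gamma>"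
    and regular: "\<And>t. D 1 t \<noteq> 0" and horizontal: "\<And>t. horizontal (\<gamma> t) (D 1 t)"
    using param unfolding open_legendrian_param_def smooth_curve_with_derivs_def by auto
  then have deriv_\<gamma>: "(\<gamma> has_vector_derivative D 1 t) (at t)" for t
    by (metis One_nat_def)
  have "continuous_on UNIV (D 1)"
    using deriv[of 1] by (meson has_vector_derivative_continuous continuous_at_imp_continuous_on)
  then have continuous: "continuous_on UNIV (\<lambda>r. hnorm (D 1 r))"
    unfolding hnorm_eq by (intro continuous_intros)
  have vertical_zero: "snd (snd (heis_mult (heis_inv (\<gamma> s)) (\<gamma> t))) = 0" if "s < t" for s t
  proof -
    define g where "g = heis_inv (\<gamma> s)"
    show ?thesis
    proof (rule koranyi_norm_eq_length_imp_vertical_zero[where c' = "\<lambda>r. heis_left_diff g (D 1 r)"])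
      show "((\<lambda>\<tau>. heis_mult (heis_inv (\<gamma> s)) (\<gamma> \<tau>))
          has_vector_derivative heis_left_diff g (D 1 t)) (at t)"
        unfolding g_def by (rule has_vector_derivative_heis_mult_left[OF deriv_\<gamma>])
      show "horizontal (heis_mult (heis_inv (\<gamma> s)) (\<gamma> t)) (heis_left_diff g (D 1 t))"
        unfolding g_def horizontal_heis_left_diff by (rule horizontal)
      show "heis_left_diff g (D 1 t) \<noteq> 0"
        using regular by (simp add: heis_left_diff_eq_0_iff)
      show "continuous_on {s..} (\<lambda>r. hnorm (heis_left_diff g (D 1 r)))"
        unfolding hnorm_heis_left_diff using continuous by (rule continuous_on_subset) simp
      show "koranyi_norm (heis_mult (heis_inv (\<gamma> s)) (\<gamma> \<tau>))
          = integral {s..\<tau>} (\<lambda>r. hnorm (heis_left_diff g (D 1 r)))"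
        if "s \<le> \<tau>" for \<tau>
        using isometric that by (simp add: hnorm_heis_left_diff d_H_def arc_length_def)
    qed (use that in simp)
  qed
  show ?thesis
  proof (cases s t rule: linorder_cases)
    case less
    then show ?thesis by (rule vertical_zero)
  next
    case equal
    then show ?thesis by (simp add: heis_mult_inv_self)
  next
    case greater
    have "heis_mult (heis_inv (\<gamma> s)) (\<gamma> t) = heis_inv (heis_mult (heis_inv (\<gamma> t)) (\<gamma> s))"
      by (simp add: heis_inv_chord)
    then show ?thesis
      using vertical_zero[OF greater] by (simp add: heis_inv_def split: prod.splits)
  qed
qed

lemma horizontal_chord_collinear:
  assumes "snd (snd (heis_mult (heis_inv (a, b, 0)) (\<alpha>, \<beta>, 0))) = 0" and "(a, b) \<noteq> (0, 0)"
  shows "\<alpha> = (\<alpha> * a + \<beta> * b) / (a^2 + b^2) * a"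
    and "\<beta> = (\<alpha> * a + \<beta> * b) / (a^2 + b^2) * b"
proof -
  have cross: "\<alpha> * b = \<beta> * a"
    using assms(1) by (simp add: heis_mult_inv_left mult.commute)
  have "a^2 + b^2 \<noteq> 0"
    using assms(2) by (simp add: sum_power2_eq_zero_iff)
  then show "\<alpha> = (\<alpha> * a + \<beta> * b) / (a^2 + b^2) * a"
    and "\<beta> = (\<alpha> * a + \<beta> * b) / (a^2 + b^2) * b"
    using cross by (simp_all add: field_simps power2_eq_square)
qed

lemma horizontal_chords_on_translated_line:
  fixes \<gamma> :: "'a \<Rightarrow> heis"
  assumes chords: "\<And>s t. snd (snd (heis_mult (heis_inv (\<gamma> s)) (\<gamma> t))) = 0"
    and base: "heis_mult (heis_inv (\<gamma> s0)) (\<gamma> t1) = (a, b, 0)" and "(a, b) \<noteq> (0, 0)"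
  defines "f \<equiv> \<lambda>t. (fst (heis_mult (heis_inv (\<gamma> s0)) (\<gamma> t)) * a
                    + fst (snd (heis_mult (heis_inv (\<gamma> s0)) (\<gamma> t))) * b) / (a^2 + b^2)"
  shows "\<gamma> t = heis_mult (\<gamma> s0) (f t * a, f t * b, 0)"
proof -
  obtain \<alpha> \<beta> \<omega> where \<delta>: "heis_mult (heis_inv (\<gamma> s0)) (\<gamma> t) = (\<alpha>, \<beta>, \<omega>)"
    by (cases "heis_mult (heis_inv (\<gamma> s0)) (\<gamma> t)")
  have "\<omega> = 0"
    using chords[of s0 t] by (simp add: \<delta>)
  moreover have "snd (snd (heis_mult (heis_inv (a, b, 0)) (\<alpha>, \<beta>, \<omega>))) = 0"
    using chords[of t1 t] heis_chord_left_translate[of "heis_inv (\<gamma> s0)" "\<gamma> t1" "\<gamma> t"]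
    by (simp add: base \<delta>)
  ultimately have "(\<alpha>, \<beta>, \<omega>) = (f t * a, f t * b, 0)"
    using horizontal_chord_collinear[OF _ \<open>(a, b) \<noteq> (0, 0)\<close>] by (simp add: f_def \<delta>)
  then show ?thesis
    by (metis \<delta> heis_mult_inv_cancel_left)
qed

lemma continuous_inj_proper_imp_surj:
  fixes f :: "real \<Rightarrow> real"
  assumes continuous: "continuous_on UNIV f" and "inj f"
    and proper: "filterlim (\<lambda>t. \<bar>f t\<bar>) at_top at_infinity"
  shows "surj f"
proof
  show "UNIV \<subseteq> range f"
  proof
    fix y :: real
    obtain R where R: "\<And>t. R \<le> norm t \<Longrightarrow> \<bar>y\<bar> + \<bar>f 0\<bar> + 1 \<le> \<bar>f t\<bar>"
      using proper unfolding filterlim_at_top eventually_at_infinity by blast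
    define T where "T = max R 1"
    have "T > 0"
      and far: "\<bar>y\<bar> + \<bar>f 0\<bar> + 1 \<le> \<bar>f T\<bar>" "\<bar>y\<bar> + \<bar>f 0\<bar> + 1 \<le> \<bar>f (-T)\<bar>"
      using R[of T] R[of "-T"] by (auto simp: T_def)
    have cont_T: "continuous_on {-T..T} f"
      using continuous continuous_on_subset by blast
    have "(f (-T) < f 0 \<and> f 0 < f T) \<or> (f T < f 0 \<and> f 0 < f (-T))"
      using \<open>T > 0\<close> \<open>inj f\<close>
      by (intro continuous_inj_imp_mono[OF _ _ cont_T]) (auto intro: inj_on_subset)
    then show "y \<in> range f"
    proof
      assume "f (-T) < f 0 \<and> f 0 < f T"
      then have "f (-T) \<le> y" "y \<le> f T" using far by auto
      then show ?thesis using IVT'[OF _ _ _ cont_T] \<open>T > 0\<close> by force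
    next
      assume "f T < f 0 \<and> f 0 < f (-T)"
      then have "f T \<le> y" "y \<le> f (-T)" using far by auto
      then show ?thesis using IVT2'[OF _ _ _ cont_T] \<open>T > 0\<close> by force
    qed
  qed
qed simp

lemma filterlim_abs_coefficient_at_top:
  fixes P V :: "'a::real_normed_vector"
  assumes "filterlim (\<lambda>t. norm (P + f t *\<^sub>R V)) at_top F" and "V \<noteq> 0"
  shows "filterlim (\<lambda>t. \<bar>f t\<bar>) at_top F"
  unfolding filterlim_at_top
proof
  fix M
  have "\<forall>\<^sub>F t in F. norm P + M * norm V \<le> norm (P + f t *\<^sub>R V)"
    using assms(1) unfolding filterlim_at_top by blast
  then show "\<forall>\<^sub>F t in F. M \<le> \<bar>f t\<bar>"
  proof (rule eventually_mono)
    fix t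
    assume "norm P + M * norm V \<le> norm (P + f t *\<^sub>R V)"
    also have "\<dots> \<le> norm P + \<bar>f t\<bar> * norm V"
      using norm_triangle_ineq[of P "f t *\<^sub>R V"] by simp
    finally show "M \<le> \<bar>f t\<bar>"
      using \<open>V \<noteq> 0\<close> by simp
  qed
qed

lemma infinite_R_circle_translated_line:
  assumes "(a, b) \<noteq> (0, 0)"
  shows "infinite_R_circle (range (\<lambda>c. heis_mult P (c * a, c * b, 0)))"
proof -
  obtain x0 y0 u0 where "P = (x0, y0, u0)" by (cases P)
  then have "range (\<lambda>c. heis_mult P (c * a, c * b, 0))
      = {(x0 + t * a, y0 + t * b, u0 + t * (-(1/2) * (y0 * a - x0 * b))) | t. True}"
    by (auto simp: heis_mult_components field_simps)
  then show ?thesis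
    unfolding infinite_R_circle_def using assms by blast
qed

lemma horizontal_chords_imp_infinite_R_circle:
  fixes \<gamma> :: "real \<Rightarrow> heis"
  assumes chords: "\<And>s t. snd (snd (heis_mult (heis_inv (\<gamma> s)) (\<gamma> t))) = 0"
    and continuous: "continuous_on UNIV \<gamma>" and "inj \<gamma>"
    and proper: "filterlim (\<lambda>t. norm (\<gamma> t)) at_top at_infinity"
  shows "infinite_R_circle (range \<gamma>)"
proof -
  define \<delta> where "\<delta> t = heis_mult (heis_inv (\<gamma> 0)) (\<gamma> t)" for t
  obtain a b where base: "\<delta> 1 = (a, b, 0)"
    using chords[of 0 1] by (metis \<delta>_def prod.collapse)
  have ab: "(a, b) \<noteq> (0, 0)"
  proof
    assume "(a, b) = (0, 0)"
    then have "\<delta> 1 = \<delta> 0"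
      using base by (simp add: \<delta>_def heis_mult_inv_self zero_prod_def)
    then have "\<gamma> 1 = \<gamma> 0"
      by (metis \<delta>_def heis_mult_inv_cancel_left)
    then show False
      using \<open>inj \<gamma>\<close> by (simp add: inj_eq)
  qed
  define f where "f t = (fst (\<delta> t) * a + fst (snd (\<delta> t)) * b) / (a^2 + b^2)" for t
  have line: "\<gamma> t = heis_mult (\<gamma> 0) (f t * a, f t * b, 0)" for t
    using horizontal_chords_on_translated_line[OF chords base[unfolded \<delta>_def] ab]
    unfolding f_def \<delta>_def .
  define V where "V = heis_left_diff (\<gamma> 0) (a, b, 0)"
  have affine: "\<gamma> t = \<gamma> 0 + f t *\<^sub>R V" for t
    using line[of t]
    by (simp add: heis_mult_eq_add_left_diff V_def
        flip: linear_scale[OF bounded_linear.linear[OF bounded_linear_heis_left_diff]])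
  have "surj f"
  proof (rule continuous_inj_proper_imp_surj)
    show "continuous_on UNIV f"
      using ab unfolding f_def \<delta>_def
      by (intro continuous_intros continuous_on_heis_mult_left continuous)
        (simp add: sum_power2_eq_zero_iff)
    show "inj f"
    proof (rule injI)
      fix s t
      assume "f s = f t"
      then have "\<gamma> s = \<gamma> t"
        by (metis line)
      then show "s = t"
        using \<open>inj \<gamma>\<close> by (simp add: inj_eq)
    qed
    show "filterlim (\<lambda>t. \<bar>f t\<bar>) at_top at_infinity"
    proof (rule filterlim_abs_coefficient_at_top)
      show "filterlim (\<lambda>t. norm (\<gamma> 0 + f t *\<^sub>R V)) at_top at_infinity"
        using proper by (simp flip: affine)
      show "V \<noteq> 0"
        using ab unfolding V_def heis_left_diff_eq_0_iff by (simp add: zero_prod_def)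
    qed
  qed
  then have "range \<gamma> = range (\<lambda>c. heis_mult (\<gamma> 0) (c * a, c * b, 0))"
    by (metis (no_types, lifting) image_image line image_cong)
  then show ?thesis
    using infinite_R_circle_translated_line[OF ab] by simp
qed

theorem proposition4p2:
  fixes K :: "heis set" and \<gamma> :: "real \<Rightarrow> heis" and D :: "nat \<Rightarrow> real \<Rightarrow> heis"
  assumes "open_legendrian_param \<gamma> D"
    and "K = range \<gamma>"
    and "\<forall>s t. s \<le> t \<longrightarrow> d_H (\<gamma> s) (\<gamma> t) = arc_length D s t"
  shows "infinite_R_circle K"
proof -
  have "continuous_on UNIV \<gamma>" and "inj \<gamma>" and "filterlim (\<lambda>t. norm (\<gamma> t)) at_top at_infinity"
    using assms(1) unfolding open_legendrian_param_def smooth_curve_with_derivs_def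
    by (metis has_vector_derivative_continuous continuous_at_imp_continuous_on)+
  moreover have "\<And>s t. snd (snd (heis_mult (heis_inv (\<gamma> s)) (\<gamma> t))) = 0"
    using isometric_legendrian_chord_horizontal[OF assms(1,3)] .
  ultimately show ?thesis
    unfolding assms(2) by (intro horizontal_chords_imp_infinite_R_circle)
qed

end
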